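(* Let $\mathbb{T}$ be a time scale, $f:\mathbb{T}\to\mathbb{R}$, and $t\in\mathbb{T}_\kappa$. Let $\alpha\in\,]0,1]$ and $A=\,]0,1]\cap\{1/q: q \text{ an odd positive integer}\}$. Then: (i) If $\alpha\in A$, $t$ is left-dense, and $f$ is nabla fractional differentiable of order $\alpha$ at $t$, then $f$ is continuous at $t$. (ii) If $\alpha\in\,]0,1]\setminus A$, $t$ is left-dense, and $f$ is nabla fractional differentiable of order $\alpha$ at $t$, then $f$ is right-continuous at $t$. (iii) If $f$ is continuous at $t$ and $t$ is left-scattered, then $f$ is nabla fractional differentiable of order $\alpha$ at $t$ with $$f^{\nabla^\alpha}(t)=\frac{f(t)-f^\rho(t)}{[t-\rho(t)]^\alpha}.$$ (iv) If $\alpha\in A$ and $t$ is left-dense, then $f$ is nabla fractional differentiable of order $\alpha$ at $t$ if and only if the limit $\lim_{s\to t}\frac{f(s)-f(t)}{(s-t)^\alpha}$ exists as a finite number; in this case $f^{\nabla^\alpha}(t)=\lim_{s\to t}\frac{f(s)-f(t)}{(s-t)^\alpha}$. (v) If $\alpha\in\,]0,1]\setminus A$ and $t$ is left-dense, then $f$ is nabla fractional differentiable of order $\alpha$ at $t$ if and only if the limit $\lim_{s\to t^+}\frac{f(s)-f(t)}{(s-t)^\alpha}$ exists as a finite number; in this case $f^{\nabla^\alpha}(t)=\lim_{s\to t^+}\frac{f(s)-f(t)}{(s-t)^\alpha}$. (vi) If $f$ is nabla fractional differentiable of order $\alpha$ at $t$, then $f(t)=f^\rho(t)+[t-\rho(t)]^\alpha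 f^{\nabla^\alpha}(t)$.
   Context: A time scale $\mathbb{T}$ is a nonempty closed subset of $\mathbb{R}$ with the topology induced from $\mathbb{R}$. The backward jump operator is $\rho(t)=\sup\{s\in\mathbb{T}: s<t\}$ (with $\sup\emptyset=\inf\mathbb{T}$), the forward jump operator is $\sigma(t)=\inf\{s\in\mathbb{T}:s>t\}$ (with $\inf\emptyset=\sup\mathbb{T}$). A point $t$ is left-dense if $\rho(t)=t$ and left-scattered if $\rho(t)<t$. $\mathbb{T}_\kappa=\mathbb{T}\setminus\{\inf\mathbb{T}\}$ if $\inf\mathbb{T}$ is finite and right-scattered ($\sigma(\inf\mathbb{T})>\inf\mathbb{T}$), and $\mathbb{T}_\kappa=\mathbb{T}$ otherwise. $f^\rho=f\circ\rho$. For $\alpha=1/q$ with $q$ odd, $x^\alpha$ denotes the real $q$-th root, defined for all real $x$. Nabla fractional derivative: for $\alpha\in]0,1]$ and $t\in\mathbb{T}_\kappa$, $f^{\nabla^\alpha}(t)$ is the real number (if it exists) such that for every $\varepsilon>0$ there is $\delta>0$ with $$\big|[f(s)-f^\rho(t)]-f^{\nabla^\alpha}(t)[s-\rho(t)]^\alpha\big|\le\varepsilon|s-\rho(t)|^\alpha$$ for all $s\in\,]t-\delta,t+\delta[\,\cap\mathbb{T}$ when $\alpha\in A$, respectively for all $s\in[t,t+\delta[\,\cap\mathbb{T}$ when $\alpha\notin A$. If it exists, $f$ is called nabla fractional differentiable of order $\alpha$ at $t$. Limits $s\to t$ are taken over $s\in\mathbb{T}$, $s\neq t$. *)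

theory Defs
  imports "HOL-Analysis.Analysis"
begin

definition time_scale :: "real set \<Rightarrow> bool" where
  "time_scale T \<longleftrightarrow> T \<noteq> {} \<and> closed T"

definition bjump :: "real set \<Rightarrow> real \<Rightarrow> real" where
  "bjump T t = (if {s\<in>T. s < t} = {} then Inf T else Sup {s\<in>T. s < t})"

definition fjump :: "real set \<Rightarrow> real \<Rightarrow> real" where
  "fjump T t = (if {s\<in>T. s > t} = {} then Sup T else Inf {s\<in>T. s > t})"

definition left_dense :: "real set \<Rightarrow> real \<Rightarrow> bool" where
  "left_dense T t \<longleftrightarrow> bjump T t = t"

definition left_scattered :: "real set \<Rightarrow> real \<Rightarrow> bool" where
  "left_scattered T t \<longleftrightarrow> bjump T t < t"

definition T_kappa :: "real set \<Rightarrow> real set" where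
  "T_kappa T = (if bdd_below T \<and> fjump T (Inf T) > Inf T then T - {Inf T} else T)"

definition setA :: "real set" where
  "setA = {a. 0 < a \<and> a \<le> 1 \<and> (\<exists>q::nat. odd q \<and> a = 1 / real q)}"

text \<open>x^alpha: for alpha = 1/q in A the real (odd) q-th root, defined for all real x;
  otherwise the usual real power (only used for x \<ge> 0).\<close>
definition frpow :: "real \<Rightarrow> real \<Rightarrow> real" where
  "frpow \<alpha> x = (if \<alpha> \<in> setA then root (THE q. odd q \<and> \<alpha> = 1 / real q) x else x powr \<alpha>)"

definition has_nabla_fderiv ::
    "real set \<Rightarrow> real \<Rightarrow> (real \<Rightarrow> real) \<Rightarrow> real \<Rightarrow> real \<Rightarrow> bool" where
  "has_nabla_fderiv T \<alpha> f t D \<longleftrightarrow> t \<in> T_kappa T \<and>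
     (\<forall>\<epsilon>>0. \<exists>\<delta>>0. \<forall>s\<in>T.
        (if \<alpha> \<in> setA then t - \<delta> < s \<and> s < t + \<delta> else t \<le> s \<and> s < t + \<delta>) \<longrightarrow>
        \<bar>(f s - f (bjump T t)) - D * frpow \<alpha> (s - bjump T t)\<bar>
          \<le> \<epsilon> * \<bar>s - bjump T t\<bar> powr \<alpha>)"

definition nabla_fdifferentiable ::
    "real set \<Rightarrow> real \<Rightarrow> (real \<Rightarrow> real) \<Rightarrow> real \<Rightarrow> bool" where
  "nabla_fdifferentiable T \<alpha> f t \<longleftrightarrow> (\<exists>D. has_nabla_fderiv T \<alpha> f t D)"

end

theory Submission
  imports Defs "HOL-Library.Landau_Symbols"
begin

text \<open>The defining estimate of the nabla fractional derivative says that the remainder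
  \<open>f s - f (\<rho> t) - D (s - \<rho> t)\<^sup>\<alpha>\<close> is \<open>o(|s - \<rho> t|\<^sup>\<alpha>)\<close> as \<open>s \<rightarrow> t\<close> along \<open>T\<close>
  (from the right only when \<open>\<alpha> \<notin> A\<close>), together with its instance \<open>s = t\<close>, which is
  exactly identity (vi). At a left-dense point \<open>\<rho> t = t\<close> and \<open>|(s - t)\<^sup>\<alpha>| = |s - t|\<^sup>\<alpha>\<close>, so
  the little-o condition says that the difference quotient tends to \<open>D\<close>: this is (iv) and
  (v), and (i), (ii) follow since \<open>(s - t)\<^sup>\<alpha> \<rightarrow> 0\<close>. At a left-scattered point
  \<open>|s - \<rho> t|\<^sup>\<alpha>\<close> stays away from \<open>0\<close> near \<open>t\<close>, so continuity of \<open>f\<close> alone makes the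
  remainder little-o, which is (iii).\<close>

lemma frpow_setA_eq_root:
  assumes "\<alpha> \<in> setA"
  shows "\<exists>q. odd q \<and> \<alpha> = 1 / real q \<and> frpow \<alpha> = root q"
proof -
  obtain q :: nat where q: "odd q" "\<alpha> = 1 / real q"
    using assms unfolding setA_def by blast
  have "(THE q. odd q \<and> \<alpha> = 1 / real q) = q"
    using q by (intro the_equality) (auto simp: divide_cancel_left)
  then show ?thesis
    using q assms by (intro exI[of _ q]) (auto simp: frpow_def fun_eq_iff)
qed

lemma abs_frpow:
  assumes "\<alpha> \<in> setA \<or> 0 \<le> x" "0 < \<alpha>"
  shows "\<bar>frpow \<alpha> x\<bar> = \<bar>x\<bar> powr \<alpha>"
proof (cases "\<alpha> \<in> setA")
  case True
  then obtain q where q: "odd q" "\<alpha> = 1 / real q" "frpow \<alpha> = root q"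
    using frpow_setA_eq_root by blast
  then have "0 < q" by (cases q) auto
  then show ?thesis
    using q by (simp add: real_root_abs[symmetric] root_powr_inverse)
next
  case False
  then show ?thesis using assms by (simp add: frpow_def)
qed

lemma frpow_0 [simp]: "0 < \<alpha> \<Longrightarrow> frpow \<alpha> 0 = 0"
  using abs_frpow[of \<alpha> 0] by simp

lemma frpow_eq_0_iff:
  assumes "\<alpha> \<in> setA \<or> 0 \<le> x" "0 < \<alpha>"
  shows "frpow \<alpha> x = 0 \<longleftrightarrow> x = 0"
  using abs_frpow[OF assms] by (metis abs_eq_0 powr_eq_0_iff)

lemma isCont_frpow:
  assumes "0 < x"
  shows "isCont (frpow \<alpha>) x"
proof (cases "\<alpha> \<in> setA")
  case True
  then show ?thesis using frpow_setA_eq_root isCont_real_root by metis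
next
  case False
  then have "frpow \<alpha> = (\<lambda>x. x powr \<alpha>)" by (simp add: frpow_def fun_eq_iff)
  then show ?thesis using assms by (auto intro!: continuous_intros)
qed

lemma tendsto_frpow_zero:
  assumes "0 < \<alpha>" "\<alpha> \<in> setA \<or> S \<subseteq> {t..}"
  shows "((\<lambda>s. frpow \<alpha> (s - t)) \<longlongrightarrow> 0) (at t within S)"
proof -
  have "eventually (\<lambda>s. \<bar>s - t\<bar> powr \<alpha> = \<bar>frpow \<alpha> (s - t)\<bar>) (at t within S)"
    unfolding eventually_at_filter using assms by (intro always_eventually) (auto simp: abs_frpow)
  moreover have "((\<lambda>s. \<bar>s - t\<bar> powr \<alpha>) \<longlongrightarrow> 0) (at t within S)"
    using assms(1) by (intro tendsto_zero_powrI tendsto_eq_intros) auto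
  ultimately show ?thesis
    by (subst tendsto_rabs_zero_iff[symmetric]) (rule Lim_transform_eventually)
qed

lemma eps_delta_iff_smallo_at_within:
  fixes g h :: "real \<Rightarrow> real"
  assumes "t \<in> S"
  shows "(\<forall>\<epsilon>>0. \<exists>\<delta>>0. \<forall>s\<in>S. dist s t < \<delta> \<longrightarrow> \<bar>g s\<bar> \<le> \<epsilon> * \<bar>h s\<bar>)
    \<longleftrightarrow> g t = 0 \<and> g \<in> o[at t within S](h)"
proof -
  have point: "(\<forall>\<epsilon>>0. \<bar>g t\<bar> \<le> \<epsilon> * \<bar>h t\<bar>) \<longleftrightarrow> g t = 0"
  proof
    assume le: "\<forall>\<epsilon>>0. \<bar>g t\<bar> \<le> \<epsilon> * \<bar>h t\<bar>"
    have "((\<lambda>\<epsilon>. \<epsilon> * \<bar>h t\<bar>) \<longlongrightarrow> 0) (at_right 0)"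
      by (auto intro!: tendsto_eq_intros)
    moreover have "eventually (\<lambda>\<epsilon>. \<bar>g t\<bar> \<le> \<epsilon> * \<bar>h t\<bar>) (at_right 0)"
      using le by (auto simp: eventually_at_right_field intro!: exI[of _ 1])
    ultimately have "\<bar>g t\<bar> \<le> 0"
      by (rule tendsto_lowerbound) auto
    then show "g t = 0" by simp
  qed simp
  have split: "(\<forall>\<epsilon>>0. \<exists>\<delta>>0. \<forall>s\<in>S. dist s t < \<delta> \<longrightarrow> P \<epsilon> s) \<longleftrightarrow>
      (\<forall>\<epsilon>>0. P \<epsilon> t) \<and> (\<forall>\<epsilon>>0. \<exists>\<delta>>0. \<forall>s\<in>S. s \<noteq> t \<and> dist s t < \<delta> \<longrightarrow> P \<epsilon> s)" for P
    using assms by (metis dist_self)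
  show ?thesis
    unfolding smallo_def eventually_at
    using split[of "\<lambda>\<epsilon> s. \<bar>g s\<bar> \<le> \<epsilon> * \<bar>h s\<bar>"] point by simp
qed

definition nabla_nbhd :: "real set \<Rightarrow> real \<Rightarrow> real \<Rightarrow> real set" where
  "nabla_nbhd T \<alpha> t = (if \<alpha> \<in> setA then T else T \<inter> {t..})"

lemma has_nabla_fderiv_iff_smallo:
  "has_nabla_fderiv T \<alpha> f t D \<longleftrightarrow> t \<in> T_kappa T
    \<and> f t = f (bjump T t) + frpow \<alpha> (t - bjump T t) * D
    \<and> (\<lambda>s. f s - f (bjump T t) - D * frpow \<alpha> (s - bjump T t))
          \<in> o[at t within nabla_nbhd T \<alpha> t](\<lambda>s. \<bar>s - bjump T t\<bar> powr \<alpha>)"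
proof (cases "t \<in> T_kappa T")
  case True
  define \<rho> where "\<rho> = bjump T t"
  have "t \<in> nabla_nbhd T \<alpha> t"
    using True by (auto simp: T_kappa_def nabla_nbhd_def split: if_splits)
  moreover have "(\<forall>s\<in>T. (if \<alpha> \<in> setA then t - \<delta> < s \<and> s < t + \<delta> else t \<le> s \<and> s < t + \<delta>)
        \<longrightarrow> P s) \<longleftrightarrow> (\<forall>s\<in>nabla_nbhd T \<alpha> t. dist s t < \<delta> \<longrightarrow> P s)" for \<delta> P
    by (auto simp: nabla_nbhd_def dist_real_def)
  ultimately show ?thesis
    using True eps_delta_iff_smallo_at_within[of t "nabla_nbhd T \<alpha> t"
        "\<lambda>s. f s - f \<rho> - D * frpow \<alpha> (s - \<rho>)" "\<lambda>s. \<bar>s - \<rho>\<bar> powr \<alpha>"]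
    unfolding has_nabla_fderiv_def \<rho>_def[symmetric] by (auto simp: algebra_simps)
qed (simp add: has_nabla_fderiv_def)

lemma has_nabla_fderiv_left_dense_iff_tendsto:
  assumes ld: "left_dense T t" and \<alpha>: "0 < \<alpha>"
  shows "has_nabla_fderiv T \<alpha> f t D \<longleftrightarrow> t \<in> T_kappa T \<and>
    ((\<lambda>s. (f s - f t) / frpow \<alpha> (s - t)) \<longlongrightarrow> D) (at t within nabla_nbhd T \<alpha> t)"
proof -
  let ?F = "at t within nabla_nbhd T \<alpha> t"
  have abs_eq: "\<forall>\<^sub>F s in ?F. \<bar>s - t\<bar> powr \<alpha> = \<bar>frpow \<alpha> (s - t)\<bar> \<and> frpow \<alpha> (s - t) \<noteq> 0"
    unfolding eventually_at_filter using \<alpha>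
    by (intro always_eventually) (auto simp: abs_frpow frpow_eq_0_iff nabla_nbhd_def)
  have "o[?F](\<lambda>s. \<bar>s - t\<bar> powr \<alpha>) = o[?F](\<lambda>s. \<bar>frpow \<alpha> (s - t)\<bar>)"
    by (rule landau_o.small.cong) (rule eventually_mono[OF abs_eq], simp)
  then have "(\<lambda>s. f s - f t - D * frpow \<alpha> (s - t)) \<in> o[?F](\<lambda>s. \<bar>s - t\<bar> powr \<alpha>)
      \<longleftrightarrow> (\<lambda>s. f s - f t - D * frpow \<alpha> (s - t)) \<in> o[?F](\<lambda>s. frpow \<alpha> (s - t))"
    by simp
  also have "\<dots> \<longleftrightarrow> ((\<lambda>s. (f s - f t - D * frpow \<alpha> (s - t)) / frpow \<alpha> (s - t)) \<longlongrightarrow> 0) ?F"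
    using abs_eq by (auto intro: smalloI_tendsto smalloD_tendsto elim: eventually_mono)
  also have "\<dots> \<longleftrightarrow> ((\<lambda>s. (f s - f t) / frpow \<alpha> (s - t) - D) \<longlongrightarrow> 0) ?F"
    by (intro tendsto_cong eventually_mono[OF abs_eq]) (simp add: field_simps)
  finally show ?thesis
    using ld \<alpha> by (simp add: has_nabla_fderiv_iff_smallo left_dense_def LIM_zero_iff)
qed

lemma has_nabla_fderiv_left_dense_imp_continuous:
  assumes ld: "left_dense T t" and \<alpha>: "0 < \<alpha>" and D: "has_nabla_fderiv T \<alpha> f t D"
  shows "continuous (at t within nabla_nbhd T \<alpha> t) f"
proof -
  let ?F = "at t within nabla_nbhd T \<alpha> t"
  have "((\<lambda>s. (f s - f t) / frpow \<alpha> (s - t) * frpow \<alpha> (s - t)) \<longlongrightarrow> D * 0) ?F"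
    using has_nabla_fderiv_left_dense_iff_tendsto[OF ld \<alpha>] D \<alpha>
    by (intro tendsto_mult tendsto_frpow_zero) (auto simp: nabla_nbhd_def)
  moreover have "\<forall>\<^sub>F s in ?F. (f s - f t) / frpow \<alpha> (s - t) * frpow \<alpha> (s - t) = f s - f t"
    unfolding eventually_at_filter using \<alpha>
    by (intro always_eventually) (auto simp: frpow_eq_0_iff nabla_nbhd_def)
  ultimately have "((\<lambda>s. f s - f t) \<longlongrightarrow> 0) ?F"
    by (simp add: tendsto_cong)
  then show ?thesis
    by (simp add: continuous_within LIM_zero_iff)
qed

lemma has_nabla_fderiv_left_scattered:
  assumes tk: "t \<in> T_kappa T" and ls: "left_scattered T t"
    and cont: "continuous (at t within T) f" and \<alpha>: "0 < \<alpha>"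
  shows "has_nabla_fderiv T \<alpha> f t ((f t - f (bjump T t)) / frpow \<alpha> (t - bjump T t))"
proof -
  define \<rho> where "\<rho> = bjump T t"
  define D where "D = (f t - f \<rho>) / frpow \<alpha> (t - \<rho>)"
  let ?F = "at t within nabla_nbhd T \<alpha> t"
  have gap: "0 < t - \<rho>"
    using ls by (simp add: left_scattered_def \<rho>_def)
  then have jump: "f t = f \<rho> + frpow \<alpha> (t - \<rho>) * D"
    using \<alpha> by (simp add: D_def frpow_eq_0_iff)
  have "(f \<longlongrightarrow> f t) ?F"
    using cont by (auto simp: continuous_within nabla_nbhd_def intro: tendsto_within_subset)
  moreover have "((\<lambda>s. frpow \<alpha> (s - \<rho>)) \<longlongrightarrow> frpow \<alpha> (t - \<rho>)) ?F"
    using gap by (intro isCont_tendsto_compose[OF isCont_frpow] tendsto_intros)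
  ultimately have "((\<lambda>s. f s - f \<rho> - D * frpow \<alpha> (s - \<rho>)) \<longlongrightarrow> 0) ?F"
    using jump by (auto intro!: tendsto_eq_intros)
  moreover have "((\<lambda>s. \<bar>s - \<rho>\<bar> powr \<alpha>) \<longlongrightarrow> \<bar>t - \<rho>\<bar> powr \<alpha>) ?F"
    using gap by (intro tendsto_intros) auto
  ultimately have "(\<lambda>s. f s - f \<rho> - D * frpow \<alpha> (s - \<rho>)) \<in> o[?F](\<lambda>s. \<bar>s - \<rho>\<bar> powr \<alpha>)"
    using gap by (intro smalloI_tendsto tendsto_imp_eventually_ne) (auto dest: tendsto_divide)
  then have "has_nabla_fderiv T \<alpha> f t D"
    using tk jump unfolding has_nabla_fderiv_iff_smallo \<rho>_def by blast
  then show ?thesis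
    unfolding D_def \<rho>_def .
qed

lemma at_within_nabla_nbhd_notin_setA:
  assumes "\<alpha> \<notin> setA"
  shows "at t within nabla_nbhd T \<alpha> t = at t within (T \<inter> {t<..})"
proof -
  have "nabla_nbhd T \<alpha> t - {t} = T \<inter> {t<..} - {t}"
    using assms by (auto simp: nabla_nbhd_def)
  then show ?thesis
    by (simp add: at_within_def)
qed

theorem theorem3p3:
  fixes T :: "real set" and f :: "real \<Rightarrow> real" and t \<alpha> :: real
  assumes ts: "time_scale T"
    and tk: "t \<in> T_kappa T"
    and \<alpha>: "0 < \<alpha>" "\<alpha> \<le> 1"
  shows
    "(\<alpha> \<in> setA \<and> left_dense T t \<and> nabla_fdifferentiable T \<alpha> f t
        \<longrightarrow> continuous (at t within T) f)
   \<and> (\<alpha> \<notin> setA \<and> left_dense T t \<and> nabla_fdifferentiable T \<alpha> f t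
        \<longrightarrow> continuous (at t within (T \<inter> {t..})) f)
   \<and> (continuous (at t within T) f \<and> left_scattered T t
        \<longrightarrow> has_nabla_fderiv T \<alpha> f t
              ((f t - f (bjump T t)) / frpow \<alpha> (t - bjump T t)))
   \<and> (\<alpha> \<in> setA \<and> left_dense T t \<longrightarrow>
        (nabla_fdifferentiable T \<alpha> f t \<longleftrightarrow>
           (\<exists>L. ((\<lambda>s. (f s - f t) / frpow \<alpha> (s - t)) \<longlongrightarrow> L) (at t within T)))
      \<and> (\<forall>D. has_nabla_fderiv T \<alpha> f t D \<longrightarrow>
           ((\<lambda>s. (f s - f t) / frpow \<alpha> (s - t)) \<longlongrightarrow> D) (at t within T)))
   \<and> (\<alpha> \<notin> setA \<and> left_dense T t \<longrightarrow>
        (nabla_fdifferentiable T \<alpha> f t \<longleftrightarrow>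
           (\<exists>L. ((\<lambda>s. (f s - f t) / frpow \<alpha> (s - t)) \<longlongrightarrow> L) (at t within (T \<inter> {t<..}))))
      \<and> (\<forall>D. has_nabla_fderiv T \<alpha> f t D \<longrightarrow>
           ((\<lambda>s. (f s - f t) / frpow \<alpha> (s - t)) \<longlongrightarrow> D) (at t within (T \<inter> {t<..}))))
   \<and> (\<forall>D. has_nabla_fderiv T \<alpha> f t D \<longrightarrow>
        f t = f (bjump T t) + frpow \<alpha> (t - bjump T t) * D)"
proof -
  let ?q = "\<lambda>s. (f s - f t) / frpow \<alpha> (s - t)"
  have jump: "\<forall>D. has_nabla_fderiv T \<alpha> f t D \<longrightarrow> f t = f (bjump T t) + frpow \<alpha> (t - bjump T t) * D"
    by (simp add: has_nabla_fderiv_iff_smallo)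
  have cont: "left_dense T t \<and> nabla_fdifferentiable T \<alpha> f t
      \<longrightarrow> continuous (at t within nabla_nbhd T \<alpha> t) f"
    using has_nabla_fderiv_left_dense_imp_continuous \<alpha>(1) by (auto simp: nabla_fdifferentiable_def)
  have lim: "left_dense T t \<longrightarrow>
      (\<forall>D. has_nabla_fderiv T \<alpha> f t D \<longleftrightarrow> (?q \<longlongrightarrow> D) (at t within nabla_nbhd T \<alpha> t))"
    using has_nabla_fderiv_left_dense_iff_tendsto tk \<alpha>(1) by blast
  have scattered: "continuous (at t within T) f \<and> left_scattered T t
      \<longrightarrow> has_nabla_fderiv T \<alpha> f t ((f t - f (bjump T t)) / frpow \<alpha> (t - bjump T t))"
    using has_nabla_fderiv_left_scattered tk \<alpha>(1) by blast
  show ?thesis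
    using jump cont lim scattered at_within_nabla_nbhd_notin_setA[of \<alpha> t T]
    by (auto simp: nabla_fdifferentiable_def nabla_nbhd_def)
qed

end
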